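(* Let $(X_f,G)$ be a semicocycle extension of the minimal equicontinuous system $(\mathbb{T},G)$ and let $\pi\colon X_f\to\mathbb{T}$ be the associated factor map. Let $\theta\in\mathbb{T}$, $x\in\pi^{-1}(\theta)$, $g\in G$, and $g_1,g_2\in\operatorname{Stab}_G(\theta)$ with $g_1\overset{\theta}{\sim}g_2$. Then $x(gg_1)=x(gg_2)$.
   Context: Setting: $G$ topological group acting jointly continuously, minimally (all orbits dense) and equicontinuously on compact Hausdorff $\mathbb{T}$; $E(\mathbb{T})$ Ellis semigroup. $K$ compact Hausdorff; $f\colon G\theta_0\to K$ continuous with $\overline{G\theta_0}=\mathbb{T}$ (a semicocycle); $F=\overline{\operatorname{gr}f}$, $F(\theta)=\{k:(\theta,k)\in F\}$; $\theta_1\sim\theta_2$ iff $F(\xi\theta_1)=F(\xi\theta_2)$ for all $\xi\in E(\mathbb{T})$; $f$ is assumed invariant under no rotation ($\sim$ is the identity). $X_f$ is the closure in $K^G$ of $\{\sigma^h f: h\in G\}$, where $f$ is identified with $(f(g\theta_0))_{g\in G}$ and $\sigma^h((x_g)_g)=(x_{gh})_g$; write $x(g)=x_g$. The factor map $\pi\colon X_f\to\mathbb{T}$ is defined by: if $(h_n)$ is a net in $G$ with $\sigma^{h_n}f\to x$, then $\pi(x)$ is the (unique) accumulation point of $(h_n\theta_0)$. $\operatorname{Stab}_G(\theta)=\{g\in G:g\theta=\theta\}$; for $g,g'\in\operatorname{Stab}_G(\theta)$, $g\overset{\theta}{\sim}g'$ means there is a neighbourhood $U$ of $\theta$ with $g\omega=g'\omega$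 for all $\omega\in U$. *)

theory Defs
  imports "HOL-Analysis.Analysis"
begin

text \<open>The topological group G is a type of class topological_group_add; its (not necessarily
  commutative) group operation is written additively, so the paper's product g h is g + h.\<close>

definition group_action :: "('g::group_add \<Rightarrow> 't \<Rightarrow> 't) \<Rightarrow> bool" where
  "group_action act \<longleftrightarrow> (\<forall>t. act 0 t = t) \<and> (\<forall>g h t. act (g + h) t = act g (act h t))"

definition jointly_continuous_action :: "('g::topological_space \<Rightarrow> 't::topological_space \<Rightarrow> 't) \<Rightarrow> bool" where
  "jointly_continuous_action act \<longleftrightarrow> continuous_on UNIV (\<lambda>p. act (fst p) (snd p))"

definition minimal_action :: "('g \<Rightarrow> 't::topological_space \<Rightarrow> 't) \<Rightarrow> bool" where
  "minimal_action act \<longleftrightarrow> (\<forall>t. closure (range (\<lambda>g. act g t)) = UNIV)"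

text \<open>Equicontinuity of the family of homeomorphisms (act g) with respect to the (unique)
  uniformity of the compact Hausdorff space T.\<close>
definition equicontinuous_action :: "('g \<Rightarrow> 't::uniform_space \<Rightarrow> 't) \<Rightarrow> bool" where
  "equicontinuous_action act \<longleftrightarrow>
     (\<forall>E. eventually E uniformity \<longrightarrow>
        eventually (\<lambda>p. \<forall>g. E (act g (fst p), act g (snd p))) uniformity)"

definition ellis_semigroup :: "('g \<Rightarrow> 't::topological_space \<Rightarrow> 't) \<Rightarrow> ('t \<Rightarrow> 't) set" where
  "ellis_semigroup act = closure (range act)"

definition orbit :: "('g \<Rightarrow> 't \<Rightarrow> 't) \<Rightarrow> 't \<Rightarrow> 't set" where
  "orbit act t0 = range (\<lambda>g. act g t0)"

definition Fgraph :: "('g \<Rightarrow> 't::topological_space \<Rightarrow> 't) \<Rightarrow> 't \<Rightarrow> ('t \<Rightarrow> 'k::topological_space) \<Rightarrow> ('t \<times> 'k) set" where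
  "Fgraph act t0 f = closure ((\<lambda>t. (t, f t)) ` orbit act t0)"

definition Fsec :: "('g \<Rightarrow> 't::topological_space \<Rightarrow> 't) \<Rightarrow> 't \<Rightarrow> ('t \<Rightarrow> 'k::topological_space) \<Rightarrow> 't \<Rightarrow> 'k set" where
  "Fsec act t0 f t = {k. (t, k) \<in> Fgraph act t0 f}"

definition rot_equiv :: "('g \<Rightarrow> 't::topological_space \<Rightarrow> 't) \<Rightarrow> 't \<Rightarrow> ('t \<Rightarrow> 'k::topological_space) \<Rightarrow> 't \<Rightarrow> 't \<Rightarrow> bool" where
  "rot_equiv act t0 f t1 t2 \<longleftrightarrow>
     (\<forall>\<xi>\<in>ellis_semigroup act. Fsec act t0 f (\<xi> t1) = Fsec act t0 f (\<xi> t2))"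

definition no_rotation_invariance :: "('g \<Rightarrow> 't::topological_space \<Rightarrow> 't) \<Rightarrow> 't \<Rightarrow> ('t \<Rightarrow> 'k::topological_space) \<Rightarrow> bool" where
  "no_rotation_invariance act t0 f \<longleftrightarrow> (\<forall>t1 t2. rot_equiv act t0 f t1 t2 \<longrightarrow> t1 = t2)"

definition fpoint :: "('g \<Rightarrow> 't \<Rightarrow> 't) \<Rightarrow> 't \<Rightarrow> ('t \<Rightarrow> 'k) \<Rightarrow> 'g \<Rightarrow> 'k" where
  "fpoint act t0 f = (\<lambda>g. f (act g t0))"

definition shift :: "'g::plus \<Rightarrow> ('g \<Rightarrow> 'k) \<Rightarrow> 'g \<Rightarrow> 'k" where
  "shift h x = (\<lambda>g. x (g + h))"

definition Xf :: "('g::plus \<Rightarrow> 't \<Rightarrow> 't) \<Rightarrow> 't \<Rightarrow> ('t \<Rightarrow> 'k::topological_space) \<Rightarrow> ('g \<Rightarrow> 'k) set" where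
  "Xf act t0 f = closure (range (\<lambda>h. shift h (fpoint act t0 f)))"

text \<open>Fibre of the factor map: x lies in pi^{-1}(theta) iff there is a net (h_n) with
  sigma^{h_n} f -> x and theta an accumulation point of (h_n t0); equivalently,
  (x, theta) lies in the closure of {(sigma^h f, h t0) : h in G} in K^G x T.\<close>
definition in_pi_fibre :: "('g::plus \<Rightarrow> 't::topological_space \<Rightarrow> 't) \<Rightarrow> 't \<Rightarrow> ('t \<Rightarrow> 'k::topological_space) \<Rightarrow> ('g \<Rightarrow> 'k) \<Rightarrow> 't \<Rightarrow> bool" where
  "in_pi_fibre act t0 f x t \<longleftrightarrow>
     (x, t) \<in> closure (range (\<lambda>h. (shift h (fpoint act t0 f), act h t0)))"

definition stab :: "('g \<Rightarrow> 't \<Rightarrow> 't) \<Rightarrow> 't \<Rightarrow> 'g set" where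
  "stab act t = {g. act g t = t}"

definition stab_equiv :: "('g \<Rightarrow> 't::topological_space \<Rightarrow> 't) \<Rightarrow> 't \<Rightarrow> 'g \<Rightarrow> 'g \<Rightarrow> bool" where
  "stab_equiv act t g g' \<longleftrightarrow> g \<in> stab act t \<and> g' \<in> stab act t \<and>
     (\<exists>U. open U \<and> t \<in> U \<and> (\<forall>w\<in>U. act g w = act g' w))"

end

theory Submission
  imports Defs
begin

text \<open>If g1 and g2 agree on a neighbourhood U of \<theta>, then every orbit point (\<sigma>^h f, h t0) with
  h t0 \<in> U satisfies (\<sigma>^h f)(g g1) = f(g g1 h t0) = f(g g2 h t0) = (\<sigma>^h f)(g g2). This
  implication is a closed condition on K^G \<times> T, so it passes to the closure, which contains
  (x, \<theta>) with \<theta> \<in> U.\<close>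

lemma closed_agree_where_snd_in_open:
  assumes "open U"
  shows "closed {p :: ('a \<Rightarrow> 'b::t2_space) \<times> 'c::topological_space.
                   snd p \<in> U \<longrightarrow> fst p a = fst p b}"
proof (rule closed_Collect_imp)
  show "open {p :: ('a \<Rightarrow> 'b) \<times> 'c. snd p \<in> U}"
    using open_vimage[OF assms continuous_on_snd[OF continuous_on_id]] by (simp add: vimage_def)
  have coord: "continuous_on UNIV (\<lambda>p :: ('a \<Rightarrow> 'b) \<times> 'c. fst p i)" for i
    using continuous_on_product_then_coordinatewise[OF continuous_on_fst[OF continuous_on_id]] .
  show "closed {p :: ('a \<Rightarrow> 'b) \<times> 'c. fst p a = fst p b}"
    by (rule closed_Collect_eq[OF coord coord])
qed

lemma shift_fpoint_add:
  fixes act :: "'g::group_add \<Rightarrow> 't \<Rightarrow> 't"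
  assumes "group_action act"
  shows "shift h (fpoint act t0 f) (g + a) = f (act g (act a (act h t0)))"
  using assms by (simp add: group_action_def shift_def fpoint_def add.assoc)

lemma in_pi_fibre_eq_if_agree_near:
  fixes act :: "'g::group_add \<Rightarrow> 't::topological_space \<Rightarrow> 't"
    and f :: "'t \<Rightarrow> 'k::t2_space"
  assumes "group_action act"
    and "in_pi_fibre act t0 f x \<theta>"
    and "open U" "\<theta> \<in> U" "\<forall>w\<in>U. act g1 w = act g2 w"
  shows "x (g + g1) = x (g + g2)"
proof -
  define C where "C = {p :: ('g \<Rightarrow> 'k) \<times> 't. snd p \<in> U \<longrightarrow> fst p (g + g1) = fst p (g + g2)}"
  have "range (\<lambda>h. (shift h (fpoint act t0 f), act h t0)) \<subseteq> C"
    using assms(5) by (auto simp: C_def shift_fpoint_add[OF assms(1)])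
  then have "closure (range (\<lambda>h. (shift h (fpoint act t0 f), act h t0))) \<subseteq> C"
    using closed_agree_where_snd_in_open[OF assms(3)] unfolding C_def
    by (rule closure_minimal)
  then have "(x, \<theta>) \<in> C"
    using assms(2) unfolding in_pi_fibre_def by blast
  then show ?thesis
    using assms(4) by (simp add: C_def)
qed

theorem mainTheorem8:
  fixes act :: "'g::topological_group_add \<Rightarrow> 't::{uniform_space, t2_space} \<Rightarrow> 't"
    and t0 :: 't
    and f :: "'t \<Rightarrow> 'k::t2_space"
    and x :: "'g \<Rightarrow> 'k"
    and \<theta> :: 't
    and g g1 g2 :: 'g
  assumes "compact (UNIV :: 't set)"
    and "compact (UNIV :: 'k set)"
    and "group_action act"
    and "jointly_continuous_action act"
    and "minimal_action act"
    and "equicontinuous_action act"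
    and "continuous_on (orbit act t0) f"
    and "no_rotation_invariance act t0 f"
    and "in_pi_fibre act t0 f x \<theta>"
    and "g1 \<in> stab act \<theta>" and "g2 \<in> stab act \<theta>"
    and "stab_equiv act \<theta> g1 g2"
  shows "x (g + g1) = x (g + g2)"
proof -
  obtain U where "open U" "\<theta> \<in> U" "\<forall>w\<in>U. act g1 w = act g2 w"
    using assms(12) unfolding stab_equiv_def by blast
  then show ?thesis
    using in_pi_fibre_eq_if_agree_near[OF assms(3,9)] by blast
qed

end
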